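(* Suppose $\mathcal{C}$ is an $[n,k]_q$ MWS code satisfying property (B). Then there exists $r=(r_1,\dots,r_{q-1})\in\mathbb{N}^{q-1}$, $r\neq 0$, such that, with $R=r_1+\dots+r_{q-1}$, the generalized $r$-repetition code $\mathcal{C}(r)$ is an $[Rn,k]_q$ MWS code satisfying properties (A) and (B).
   Context: Fix a primitive element $\alpha$ of $\mathbb{F}_q$; $\mathbb{N}=\{0,1,2,\dots\}$. An $[n,k]_q$ code is a $k$-dimensional subspace of $\mathbb{F}_q^n$ (non-degenerate if $k\ge2$); it is MWS if it has exactly $\frac{q^k-1}{q-1}$ distinct non-zero Hamming weights. For $c\in\mathbb{F}_q^n$, $\beta\in\mathbb{F}_q$, $c[\beta]=|\{l:c_l=\beta\}|$ and $V(c)=(c[\alpha],\dots,c[\alpha^{q-1}],c[0])$. For $r\in\mathbb{N}^{q-1}$, the generalized $r$-repetition code is $\mathcal{C}(r)=\{c^r: c\in\mathcal{C}\}$, where $c^r$ is the concatenation of $r_1$ copies of $\alpha c$, then $r_2$ copies of $\alpha^2 c$, ..., then $r_{q-1}$ copies of $\alpha^{q-1}c$ (a vector of length $Rn$). Property (A) for a code $\mathcal{D}$: there exists $\beta\in\mathbb{F}_q^*$ such that for $a,b\in\mathcal{D}$, $a[\beta]=b[\beta]$ only if $a=b$. Property (B) for a code $\mathcal{D}$: for every $c\in\mathcal{D}\setminus\{0\}$ the entries of $V(c)$ are pairwise distinct. *)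

theory Defs
  imports Main "HOL.Vector_Spaces" "HOL-Library.Function_Algebras"
begin

text \<open>Vectors of F_q^n are represented as functions nat => 'a that vanish at every
  index >= n; F_q is a finite field type 'a, q = card (UNIV :: 'a set).\<close>

definition fscale :: "'a::field \<Rightarrow> (nat \<Rightarrow> 'a) \<Rightarrow> (nat \<Rightarrow> 'a)" where
  "fscale c v = (\<lambda>i. c * v i)"

interpretation fvs: vector_space fscale
  by unfold_locales (auto simp: fscale_def fun_eq_iff algebra_simps)

definition vecs :: "nat \<Rightarrow> (nat \<Rightarrow> 'a::zero) set" where
  "vecs n = {v. \<forall>i\<ge>n. v i = 0}"

definition primitive :: "'a::{finite,field} \<Rightarrow> bool" where
  "primitive \<alpha> \<longleftrightarrow> (\<forall>x. x \<noteq> 0 \<longrightarrow> (\<exists>i::nat. x = \<alpha> ^ i))"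

definition is_code :: "nat \<Rightarrow> nat \<Rightarrow> (nat \<Rightarrow> 'a::{finite,field}) set \<Rightarrow> bool" where
  "is_code n k C \<longleftrightarrow> C \<subseteq> vecs n \<and> fvs.subspace C \<and> fvs.dim C = k \<and>
     (k \<ge> 2 \<longrightarrow> (\<forall>i<n. \<exists>c\<in>C. c i \<noteq> 0))"

definition hwt :: "nat \<Rightarrow> (nat \<Rightarrow> 'a::zero) \<Rightarrow> nat" where
  "hwt n c = card {l. l < n \<and> c l \<noteq> 0}"

definition is_MWS :: "nat \<Rightarrow> nat \<Rightarrow> (nat \<Rightarrow> 'a::{finite,field}) set \<Rightarrow> bool" where
  "is_MWS n k C \<longleftrightarrow> is_code n k C \<and>
     card (hwt n ` (C - {0})) = (card (UNIV :: 'a set) ^ k - 1) div (card (UNIV :: 'a set) - 1)"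

definition cnt :: "nat \<Rightarrow> (nat \<Rightarrow> 'a) \<Rightarrow> 'a \<Rightarrow> nat" where
  "cnt n c \<beta> = card {l. l < n \<and> c l = \<beta>}"

definition Vvec :: "'a::{finite,field} \<Rightarrow> nat \<Rightarrow> (nat \<Rightarrow> 'a) \<Rightarrow> nat list" where
  "Vvec \<alpha> n c = map (\<lambda>j. cnt n c (\<alpha> ^ j)) [1..<card (UNIV :: 'a set)] @ [cnt n c 0]"

definition propA :: "nat \<Rightarrow> (nat \<Rightarrow> 'a::{finite,field}) set \<Rightarrow> bool" where
  "propA n D \<longleftrightarrow> (\<exists>\<beta>. \<beta> \<noteq> 0 \<and> (\<forall>a\<in>D. \<forall>b\<in>D. cnt n a \<beta> = cnt n b \<beta> \<longrightarrow> a = b))"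

definition propB :: "'a::{finite,field} \<Rightarrow> nat \<Rightarrow> (nat \<Rightarrow> 'a) set \<Rightarrow> bool" where
  "propB \<alpha> n D \<longleftrightarrow> (\<forall>c\<in>D - {0}. distinct (Vvec \<alpha> n c))"

definition to_list :: "nat \<Rightarrow> (nat \<Rightarrow> 'a) \<Rightarrow> 'a list" where
  "to_list n v = map v [0..<n]"

definition of_list :: "'a::zero list \<Rightarrow> (nat \<Rightarrow> 'a)" where
  "of_list xs = (\<lambda>i. if i < length xs then xs ! i else 0)"

text \<open>c^r: r_1 copies of alpha c, then r_2 copies of alpha^2 c, ..., r_(q-1) copies of
  alpha^(q-1) c; r is given by its values r 1, ..., r (q-1).\<close>
definition rep_vec :: "'a::{finite,field} \<Rightarrow> (nat \<Rightarrow> nat) \<Rightarrow> nat \<Rightarrow> (nat \<Rightarrow> 'a) \<Rightarrow> (nat \<Rightarrow> 'a)" where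
  "rep_vec \<alpha> r n c = of_list (concat (map (\<lambda>j. concat (replicate (r j)
       (to_list n (fscale (\<alpha> ^ j) c)))) [1..<card (UNIV :: 'a set)]))"

definition rep_code :: "'a::{finite,field} \<Rightarrow> (nat \<Rightarrow> nat) \<Rightarrow> nat \<Rightarrow> (nat \<Rightarrow> 'a) set \<Rightarrow> (nat \<Rightarrow> 'a) set" where
  "rep_code \<alpha> r n C = rep_vec \<alpha> r n ` C"

end

theory Submission
  imports Defs "HOL-Library.FuncSet" "HOL-Library.Cardinality"
begin

text \<open>With weights r_j = (n+1)^(j-1), the number of entries equal to \<gamma> \<noteq> 0 in c^r is
  \<Sum>_j (n+1)^(j-1) c[\<gamma> \<alpha>^-j], a base-(n+1) numeral whose digits c[\<gamma> \<alpha>^-j] are at most n.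
  Hence c^r[\<gamma>] = d^r[\<delta>] forces c[\<gamma> \<alpha>^-j] = d[\<delta> \<alpha>^-j] for all j. For d = c this turns
  property (B) of c into property (B) of c^r. For \<gamma> = \<delta> = 1 it shows that c^r[1] = d^r[1]
  makes all non-zero counts, and hence the weights, of c and d agree. In an MWS code the
  q^k - 1 non-zero codewords fall into (q^k-1)/(q-1) weight classes, each containing the q - 1
  non-zero multiples of any of its members, so every class is a single punctured line: d is a
  multiple s c, and c[1] = d[1] = c[1/s] together with (B) gives s = 1. Finally c \<mapsto> c^r is
  linear and multiplies weights by R, so it preserves dimension, non-degeneracy and MWS.\<close>

section \<open>Primitive elements and the vector V(c)\<close>

lemma two_le_card_field: "2 \<le> CARD('a::{finite,field})"
proof -
  have "card {0::'a, 1} \<le> CARD('a)" by (rule card_mono) auto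
  thus ?thesis by simp
qed

lemma power_card_minus_one:
  fixes \<alpha> :: "'a::{finite,field}"
  assumes "\<alpha> \<noteq> 0"
  shows "\<alpha> ^ (CARD('a) - 1) = 1"
proof -
  let ?U = "UNIV - {0::'a}"
  have inj: "inj_on ((*) \<alpha>) ?U" using assms by (auto simp: inj_on_def)
  have "(*) \<alpha> ` ?U = ?U"
  proof (intro equalityI subsetI)
    fix y assume "y \<in> ?U"
    hence "y = \<alpha> * (y / \<alpha>)" "y / \<alpha> \<in> ?U" using assms by auto
    thus "y \<in> (*) \<alpha> ` ?U" by blast
  qed (use assms in auto)
  hence "prod id ?U = prod ((*) \<alpha>) ?U"
    using prod.reindex[OF inj, of id] by simp
  also have "\<dots> = \<alpha> ^ card ?U * prod id ?U" by (simp add: prod.distrib)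
  finally have "\<alpha> ^ card ?U = 1" by (simp add: prod_zero_iff)
  thus ?thesis by (simp add: card_Diff_singleton)
qed

lemma primitive_bij_betw_powers:
  fixes \<alpha> :: "'a::{finite,field}"
  assumes "primitive \<alpha>" and "\<alpha> \<noteq> 0"
  shows "bij_betw (\<lambda>j. \<alpha> ^ j) {1..<CARD('a)} (UNIV - {0})"
proof -
  let ?m = "CARD('a) - 1"
  have m: "1 \<le> ?m" "\<alpha> ^ ?m = 1"
    using two_le_card_field[where 'a='a] power_card_minus_one[OF assms(2)] by auto
  have "(\<lambda>j. \<alpha> ^ j) ` {1..<CARD('a)} = UNIV - {0}"
  proof (intro equalityI subsetI)
    fix x :: 'a assume "x \<in> UNIV - {0}"
    then obtain i where "x = \<alpha> ^ i" using assms(1) unfolding primitive_def by blast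
    also have "\<alpha> ^ i = (\<alpha> ^ ?m) ^ (i div ?m) * \<alpha> ^ (i mod ?m)"
      by (subst mult_div_mod_eq[of ?m i, symmetric]) (simp only: power_add power_mult)
    finally have x: "x = \<alpha> ^ (i mod ?m)" using m by simp
    show "x \<in> (\<lambda>j. \<alpha> ^ j) ` {1..<CARD('a)}"
    proof (cases "i mod ?m = 0")
      case True
      thus ?thesis using x m by (intro image_eqI[of _ _ ?m]) auto
    next
      case False
      moreover have "i mod ?m < ?m" using m(1) by simp
      ultimately show ?thesis using x by (intro image_eqI[of _ _ "i mod ?m"]) auto
    qed
  qed (use assms(2) in auto)
  moreover from this have "inj_on (\<lambda>j. \<alpha> ^ j) {1..<CARD('a)}"
    by (intro eq_card_imp_inj_on) (auto simp: card_Diff_singleton)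
  ultimately show ?thesis by (simp add: bij_betw_def)
qed

lemma primitive_nonzero_eq_inverse_power:
  fixes \<alpha> x :: "'a::{finite,field}"
  assumes "primitive \<alpha>" and "\<alpha> \<noteq> 0" and "x \<noteq> 0"
  shows "\<exists>i < CARD('a) - 1. x = 1 / \<alpha> ^ Suc i"
proof -
  have "1 / x \<in> (\<lambda>j. \<alpha> ^ j) ` {1..<CARD('a)}"
    using primitive_bij_betw_powers[OF assms(1,2)] assms(3) by (simp add: bij_betw_def)
  then obtain j where j: "j \<in> {1..<CARD('a)}" "1 / x = \<alpha> ^ j" by blast
  hence "x = 1 / \<alpha> ^ j" by (metis inverse_eq_divide inverse_inverse_eq)
  hence "x = 1 / \<alpha> ^ Suc (j - 1)" using j(1) by simp
  moreover have "j - 1 < CARD('a) - 1" using j(1) by auto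
  ultimately show ?thesis by blast
qed

lemma distinct_Vvec_iff_inj_cnt:
  fixes \<alpha> :: "'a::{finite,field}"
  assumes "primitive \<alpha>" and "\<alpha> \<noteq> 0"
  shows "distinct (Vvec \<alpha> n c) \<longleftrightarrow> inj (cnt n c)"
proof -
  let ?e = "\<lambda>j. \<alpha> ^ j" and ?J = "{1..<CARD('a)}"
  have e: "inj_on ?e ?J" "?e ` ?J = UNIV - {0}"
    using primitive_bij_betw_powers[OF assms] by (auto simp: bij_betw_def)
  have "distinct (Vvec \<alpha> n c) \<longleftrightarrow>
      inj_on (cnt n c \<circ> ?e) ?J \<and> cnt n c 0 \<notin> (cnt n c \<circ> ?e) ` ?J"
    by (simp add: Vvec_def distinct_map o_def)
  also have "\<dots> \<longleftrightarrow> inj_on (cnt n c) (UNIV - {0}) \<and> cnt n c 0 \<notin> cnt n c ` (UNIV - {0})"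
    using comp_inj_on_iff[OF e(1), of "cnt n c"] e(2) image_comp[of "cnt n c" ?e ?J] by simp
  also have "\<dots> \<longleftrightarrow> inj (cnt n c)"
    using inj_on_insert[of "cnt n c" 0 "UNIV - {0}"] by simp
  finally show ?thesis .
qed

lemma nonzero_if_distinct_Vvec:
  fixes \<alpha> :: "'a::{finite,field}"
  assumes "distinct (Vvec \<alpha> n c)"
  shows "\<alpha> \<noteq> 0"
proof
  assume "\<alpha> = 0"
  have "[1..<CARD('a)] = 1 # [Suc 1..<CARD('a)]"
    using two_le_card_field[where 'a='a] by (simp add: upt_conv_Cons)
  thus False using assms \<open>\<alpha> = 0\<close> by (simp add: Vvec_def)
qed

section \<open>Weight classes of MWS codes\<close>

lemma finite_vecs: "finite (vecs n :: (nat \<Rightarrow> 'a::{finite,zero}) set)"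
proof -
  have "vecs n \<subseteq> (\<lambda>g i. if i < n then g i else 0) ` ({..<n} \<rightarrow>\<^sub>E (UNIV :: 'a set))"
  proof
    fix v :: "nat \<Rightarrow> 'a" assume "v \<in> vecs n"
    hence "v = (\<lambda>i. if i < n then restrict v {..<n} i else 0)"
      by (auto simp: vecs_def fun_eq_iff)
    moreover have "restrict v {..<n} \<in> {..<n} \<rightarrow>\<^sub>E UNIV" by simp
    ultimately show "v \<in> (\<lambda>g i. if i < n then g i else 0) ` ({..<n} \<rightarrow>\<^sub>E UNIV)"
      by (rule image_eqI)
  qed
  thus ?thesis by (rule finite_subset) (simp add: finite_PiE)
qed

lemma card_code:
  fixes C :: "(nat \<Rightarrow> 'a::{finite,field}) set"
  assumes "is_code n k C"
  shows "finite C" and "card C = CARD('a) ^ k"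
proof -
  have C: "C \<subseteq> vecs n" "fvs.subspace C" "fvs.dim C = k"
    using assms by (auto simp: is_code_def)
  show fC: "finite C" using C(1) finite_vecs finite_subset by blast
  obtain B where B: "B \<subseteq> C" "fvs.independent B" "C \<subseteq> fvs.span B" "card B = k"
    using fvs.basis_exists C(3) by blast
  have fB: "finite B" using B(1) fC finite_subset by blast
  define F where "F u = (\<Sum>v\<in>B. fscale (u v) v)" for u :: "(nat \<Rightarrow> 'a) \<Rightarrow> 'a"
  have "C = range F"
    using fvs.span_subspace[OF B(1,3) C(2)] fvs.span_finite[OF fB] by (simp add: F_def)
  also have "range F = F ` (B \<rightarrow>\<^sub>E UNIV)"
  proof -
    have "F u = F (restrict u B)" for u unfolding F_def by (rule sum.cong) auto
    hence "F u \<in> F ` (B \<rightarrow>\<^sub>E UNIV)" for u by (rule image_eqI[of _ F "restrict u B"]) simp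
    thus ?thesis by blast
  qed
  finally have C_image: "C = F ` (B \<rightarrow>\<^sub>E UNIV)" .
  have "inj_on F (B \<rightarrow>\<^sub>E UNIV)"
  proof (rule inj_onI)
    fix u u' assume u: "u \<in> B \<rightarrow>\<^sub>E UNIV" "u' \<in> B \<rightarrow>\<^sub>E UNIV" and "F u = F u'"
    hence "(\<Sum>v\<in>B. fscale (u v - u' v) v) = 0"
      by (simp add: F_def fvs.scale_left_diff_distrib sum_subtractf)
    hence "\<forall>v\<in>B. u v - u' v = 0"
      using fvs.independentD[OF B(2) fB subset_refl, of "\<lambda>v. u v - u' v"] by blast
    thus "u = u'" using u by (auto simp: fun_eq_iff PiE_def extensional_def)
  qed
  hence "card C = card (B \<rightarrow>\<^sub>E (UNIV::'a set))" using C_image card_image by blast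
  thus "card C = CARD('a) ^ k" by (simp add: card_PiE fB B(4))
qed

lemma is_MWS_zero_code_iff: "is_MWS n k {0 :: nat \<Rightarrow> 'a::{finite,field}} \<longleftrightarrow> k = 0"
proof -
  have "fvs.dim {0 :: nat \<Rightarrow> 'a} = 0"
    by (rule fvs.dim_unique[of "{}"]) (auto simp: fvs.span_empty fvs.independent_empty)
  thus ?thesis by (auto simp: is_MWS_def is_code_def vecs_def)
qed

lemma hwt_eq_0_iff:
  assumes "c \<in> vecs n"
  shows "hwt n c = 0 \<longleftrightarrow> c = 0"
proof -
  have "hwt n c = 0 \<longleftrightarrow> (\<forall>l<n. c l = 0)" by (simp add: hwt_def)
  also have "\<dots> \<longleftrightarrow> c = 0" using assms by (auto simp: vecs_def fun_eq_iff) (metis not_le)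
  finally show ?thesis .
qed

lemma cnt_le: "cnt n c x \<le> n"
  unfolding cnt_def using card_mono[of "{..<n}" "{l. l < n \<and> c l = x}"] by auto

lemma cnt_fscale:
  fixes a :: "'a::field"
  assumes "a \<noteq> 0"
  shows "cnt n (fscale a c) \<gamma> = cnt n c (\<gamma> / a)"
proof -
  have "a * c l = \<gamma> \<longleftrightarrow> c l = \<gamma> / a" for l using assms by (auto simp: field_simps)
  thus ?thesis by (simp add: cnt_def fscale_def)
qed

lemma hwt_eq_sum_cnt: "hwt n c = (\<Sum>x\<in>UNIV - {0}. cnt n c x)"
  for c :: "nat \<Rightarrow> 'a::{finite,zero}"
proof -
  have "{l. l < n \<and> c l \<noteq> 0} = (\<Union>x\<in>UNIV - {0}. {l. l < n \<and> c l = x})" by auto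
  hence "hwt n c = card (\<Union>x\<in>UNIV - {0}. {l. l < n \<and> c l = x})" by (simp add: hwt_def)
  also have "\<dots> = (\<Sum>x\<in>UNIV - {0}. cnt n c x)"
    unfolding cnt_def by (rule card_UN_disjoint) auto
  finally show ?thesis .
qed

lemma card_nonzero_multiples:
  fixes x :: "nat \<Rightarrow> 'a::{finite,field}"
  assumes "x \<noteq> 0"
  shows "card ((\<lambda>a. fscale a x) ` (UNIV - {0})) = CARD('a) - 1"
proof -
  obtain i where i: "x i \<noteq> 0" using assms by (auto simp: fun_eq_iff)
  have "inj (\<lambda>a. fscale a x)"
  proof (rule injI)
    fix a b assume "fscale a x = fscale b x"
    hence "a * x i = b * x i" unfolding fscale_def by (rule fun_cong)
    thus "a = b" using i by simp
  qed
  thus ?thesis by (simp add: card_image inj_on_subset card_Diff_singleton)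
qed

lemma card_fibre_eq_if_tight:
  fixes f :: "'a \<Rightarrow> 'b"
  assumes "finite S"
    and "\<And>w. w \<in> f ` S \<Longrightarrow> m \<le> card {x \<in> S. f x = w}"
    and "card S = m * card (f ` S)"
    and "w \<in> f ` S"
  shows "card {x \<in> S. f x = w} = m"
proof -
  have "(\<Sum>w\<in>f ` S. card {x \<in> S. f x = w}) = card S"
    using sum.group[of S "f ` S" f "\<lambda>_. 1::nat"] assms(1) by simp
  also have "\<dots> = (\<Sum>w\<in>f ` S. m)" using assms(3) by simp
  finally have "(\<Sum>w\<in>f ` S. m) = (\<Sum>w\<in>f ` S. card {x \<in> S. f x = w})" ..
  from sum_mono_inv[OF this assms(2,4)] show ?thesis using assms(1) by simp
qed

lemma diff_one_dvd_power_diff_one: "(q - 1) dvd (q ^ k - (1::nat))"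
proof (cases "q = 0")
  case True thus ?thesis by (cases k) auto
next
  case False
  show ?thesis
  proof (induction k)
    case (Suc k)
    have "q ^ Suc k - 1 = q * (q ^ k - 1) + (q - 1)"
      using False by (simp add: algebra_simps diff_mult_distrib2)
    thus ?case using Suc.IH by simp
  qed simp
qed

lemma MWS_equal_weight_imp_multiple:
  fixes C :: "(nat \<Rightarrow> 'a::{finite,field}) set"
  assumes MWS: "is_MWS n k C" and c: "c \<in> C - {0}" and d: "d \<in> C - {0}"
    and weight: "hwt n c = hwt n d"
  shows "\<exists>s. s \<noteq> 0 \<and> d = fscale s c"
proof -
  let ?m = "CARD('a) - 1" and ?S = "C - {0}"
  define line where "line x = (\<lambda>a. fscale a x) ` (UNIV - {0::'a})" for x :: "nat \<Rightarrow> 'a"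
  define fibre where "fibre x = {y \<in> ?S. hwt n y = hwt n x}" for x :: "nat \<Rightarrow> 'a"
  have code: "is_code n k C" using MWS by (simp add: is_MWS_def)
  have sub: "fvs.subspace C" using code by (simp add: is_code_def)
  have fin: "finite ?S" using card_code(1)[OF code] by simp
  have line_fibre: "line x \<subseteq> fibre x" if "x \<in> ?S" for x
    using that fvs.subspace_scale[OF sub]
    by (auto simp: line_def fibre_def hwt_def fscale_def fun_eq_iff)
  have card_line: "card (line x) = ?m" if "x \<in> ?S" for x
    using card_nonzero_multiples[of x] that by (simp add: line_def)
  have "card ?S = CARD('a) ^ k - 1"
    using card_code[OF code] fvs.subspace_0[OF sub] by (simp add: card_Diff_singleton)
  also have "\<dots> = ?m * card (hwt n ` ?S)"
    using MWS diff_one_dvd_power_diff_one[of "CARD('a)" k] by (simp add: is_MWS_def)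
  finally have "card (fibre c) = ?m"
    unfolding fibre_def
  proof (rule card_fibre_eq_if_tight[OF fin, rotated])
    fix w assume "w \<in> hwt n ` ?S"
    then obtain x where x: "x \<in> ?S" "w = hwt n x" by blast
    have "card (line x) \<le> card (fibre x)"
      using line_fibre[OF x(1)] fin by (intro card_mono) (auto simp: fibre_def)
    thus "?m \<le> card {y \<in> ?S. hwt n y = w}" using card_line[OF x(1)] x by (simp add: fibre_def)
  qed (use c in auto)
  hence "line c = fibre c"
    using line_fibre[OF c] card_line[OF c] fin by (intro card_subset_eq) (auto simp: fibre_def)
  moreover have "d \<in> fibre c" using d weight by (simp add: fibre_def)
  ultimately show ?thesis by (auto simp: line_def)
qed

lemma MWS_eq_if_nonzero_counts_eq:
  fixes \<alpha> :: "'a::{finite,field}"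
  assumes MWS: "is_MWS n k C" and B: "propB \<alpha> n C" and prim: "primitive \<alpha>" and \<alpha>: "\<alpha> \<noteq> 0"
    and cd: "c \<in> C" "d \<in> C" and counts: "\<And>x. x \<noteq> 0 \<Longrightarrow> cnt n c x = cnt n d x"
  shows "c = d"
proof -
  have C: "C \<subseteq> vecs n" using MWS by (simp add: is_MWS_def is_code_def)
  have weight: "hwt n c = hwt n d" unfolding hwt_eq_sum_cnt using counts by simp
  show ?thesis
  proof (cases "c = 0 \<or> d = 0")
    case True
    thus ?thesis using weight hwt_eq_0_iff cd C by (metis subsetD)
  next
    case False
    then obtain s where s: "s \<noteq> 0" "d = fscale s c"
      using MWS_equal_weight_imp_multiple[OF MWS _ _ weight] cd by blast
    have "inj (cnt n c)"
      using B cd False distinct_Vvec_iff_inj_cnt[OF prim \<alpha>] by (simp add: propB_def)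
    moreover have "cnt n c 1 = cnt n c (1 / s)" using counts[of 1] s cnt_fscale by simp
    ultimately have "s = 1" by (simp add: inj_eq)
    thus ?thesis using s by (simp add: fscale_def)
  qed
qed

section \<open>Generalized repetition codes\<close>

definition rep_pattern :: "'a::{finite,field} \<Rightarrow> (nat \<Rightarrow> nat) \<Rightarrow> nat \<Rightarrow> ('a \<times> nat) list" where
  "rep_pattern \<alpha> r n = concat (map (\<lambda>j. concat (replicate (r j) (map (\<lambda>l. (\<alpha> ^ j, l)) [0..<n])))
      [1..<CARD('a)])"

lemma rep_vec_eq_pattern:
  "rep_vec \<alpha> r n c = (\<lambda>i. if i < length (rep_pattern \<alpha> r n)
      then fst (rep_pattern \<alpha> r n ! i) * c (snd (rep_pattern \<alpha> r n ! i)) else 0)"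
proof -
  have "concat (map (\<lambda>j. concat (replicate (r j) (to_list n (fscale (\<alpha> ^ j) c)))) [1..<CARD('a)])
      = map (\<lambda>p. fst p * c (snd p)) (rep_pattern \<alpha> r n)"
    by (simp add: rep_pattern_def to_list_def fscale_def map_concat o_def)
  thus ?thesis by (simp add: rep_vec_def of_list_def fun_eq_iff)
qed

lemma length_rep_pattern:
  "length (rep_pattern \<alpha> r n) = (\<Sum>j\<in>{1..<CARD('a)}. r j) * n"
  for \<alpha> :: "'a::{finite,field}"
  by (simp add: rep_pattern_def length_concat o_def sum_list_replicate
      sum_list_distinct_conv_sum_set sum_distrib_right)

lemma set_rep_pattern:
  assumes "\<alpha> \<noteq> 0" and "p \<in> set (rep_pattern \<alpha> r n)"
  shows "fst p \<noteq> 0" and "snd p < n"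
  using assms by (auto simp: rep_pattern_def)

lemma card_rep_vec:
  fixes \<alpha> :: "'a::{finite,field}"
  shows "card {l. l < (\<Sum>j\<in>{1..<CARD('a)}. r j) * n \<and> P (rep_vec \<alpha> r n c l)}
    = (\<Sum>j\<in>{1..<CARD('a)}. r j * card {l. l < n \<and> P (\<alpha> ^ j * c l)})"
proof -
  let ?L = "map (\<lambda>p. fst p * c (snd p)) (rep_pattern \<alpha> r n)"
  have "{l. l < (\<Sum>j\<in>{1..<CARD('a)}. r j) * n \<and> P (rep_vec \<alpha> r n c l)}
      = {l. l < length ?L \<and> P (?L ! l)}"
    by (auto simp: rep_vec_eq_pattern length_rep_pattern)
  also have "card \<dots> = length (filter P ?L)" by (simp add: length_filter_conv_card)
  also have "\<dots> = (\<Sum>j\<in>{1..<CARD('a)}. r j * length (filter P (map (\<lambda>l. \<alpha> ^ j * c l) [0..<n])))"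
    by (simp add: rep_pattern_def filter_concat length_concat o_def map_concat sum_list_replicate
        sum_list_distinct_conv_sum_set)
  also have "\<dots> = (\<Sum>j\<in>{1..<CARD('a)}. r j * card {l. l < n \<and> P (\<alpha> ^ j * c l)})"
    by (simp add: length_filter_conv_card cong: conj_cong)
  finally show ?thesis .
qed

lemma cnt_rep_vec:
  fixes \<alpha> :: "'a::{finite,field}"
  assumes "\<alpha> \<noteq> 0"
  shows "cnt ((\<Sum>j\<in>{1..<CARD('a)}. r j) * n) (rep_vec \<alpha> r n c) \<gamma>
    = (\<Sum>j\<in>{1..<CARD('a)}. r j * cnt n c (\<gamma> / \<alpha> ^ j))"
proof -
  have "\<alpha> ^ j * x = \<gamma> \<longleftrightarrow> x = \<gamma> / \<alpha> ^ j" for j x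
    using assms by (auto simp: field_simps)
  thus ?thesis using card_rep_vec[of r n "\<lambda>x. x = \<gamma>"] by (simp add: cnt_def)
qed

lemma hwt_rep_vec:
  fixes \<alpha> :: "'a::{finite,field}"
  assumes "\<alpha> \<noteq> 0"
  shows "hwt ((\<Sum>j\<in>{1..<CARD('a)}. r j) * n) (rep_vec \<alpha> r n c)
    = (\<Sum>j\<in>{1..<CARD('a)}. r j) * hwt n c"
  using card_rep_vec[of r n "\<lambda>x. x \<noteq> 0" \<alpha> c] assms
  by (simp add: hwt_def sum_distrib_right)

lemma rep_vec_linear: "module_hom fscale fscale (rep_vec \<alpha> r n)"
  by unfold_locales (simp_all add: rep_vec_eq_pattern fscale_def fun_eq_iff algebra_simps)

lemma dim_image_eq_if_inj_on:
  assumes "module_hom fscale fscale f" and "fvs.subspace C" and "inj_on f C"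
  shows "fvs.dim (f ` C) = fvs.dim C"
proof -
  interpret f: module_hom fscale fscale f by fact
  obtain B where B: "B \<subseteq> C" "fvs.independent B" "C \<subseteq> fvs.span B" "card B = fvs.dim C"
    using fvs.basis_exists by blast
  have span: "fvs.span B = C" using fvs.span_subspace[OF B(1,3) assms(2)] .
  have "fvs.independent (f ` B)"
    using f.independent_injective_image[OF B(2)] assms(3) span by simp
  moreover have "f ` C = fvs.span (f ` B)" using f.span_image[of B] span by simp
  ultimately have "fvs.dim (f ` C) = card (f ` B)" using fvs.dim_span_eq_card_independent by simp
  also have "\<dots> = card B" using card_image inj_on_subset[OF assms(3) B(1)] by blast
  finally show ?thesis using B(4) by simp
qed

lemma inj_on_rep_vec:
  fixes \<alpha> :: "'a::{finite,field}"
  assumes "\<alpha> \<noteq> 0" and "0 < (\<Sum>j\<in>{1..<CARD('a)}. r j)"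
  shows "inj_on (rep_vec \<alpha> r n) (vecs n)"
proof -
  interpret \<rho>: module_hom fscale fscale "rep_vec \<alpha> r n" by (rule rep_vec_linear)
  show ?thesis
  proof (rule inj_onI)
    fix c d assume "c \<in> vecs n" "d \<in> vecs n" "rep_vec \<alpha> r n c = rep_vec \<alpha> r n d"
    hence "rep_vec \<alpha> r n (c - d) = 0" and cd: "c - d \<in> vecs n"
      by (simp_all add: \<rho>.diff vecs_def)
    hence "(\<Sum>j\<in>{1..<CARD('a)}. r j) * hwt n (c - d) = 0"
      by (simp only: hwt_rep_vec[OF assms(1), symmetric]) (simp add: hwt_def)
    hence "hwt n (c - d) = 0" using assms(2) by (simp del: sum_eq_0_iff)
    thus "c = d" using hwt_eq_0_iff[OF cd] by simp
  qed
qed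

lemma rep_code_is_code:
  fixes \<alpha> :: "'a::{finite,field}" and r :: "nat \<Rightarrow> nat"
  defines "R \<equiv> \<Sum>j\<in>{1..<CARD('a)}. r j"
  assumes \<alpha>: "\<alpha> \<noteq> 0" and R: "0 < R" and code: "is_code n k C"
  shows "is_code (R * n) k (rep_code \<alpha> r n C)"
proof -
  interpret \<rho>: module_hom fscale fscale "rep_vec \<alpha> r n" by (rule rep_vec_linear)
  have C: "C \<subseteq> vecs n" "fvs.subspace C" "fvs.dim C = k"
    and nondeg: "\<And>i. 2 \<le> k \<Longrightarrow> i < n \<Longrightarrow> \<exists>c\<in>C. c i \<noteq> 0"
    using code by (auto simp: is_code_def)
  have "rep_code \<alpha> r n C \<subseteq> vecs (R * n)"
    by (auto simp: rep_code_def vecs_def rep_vec_eq_pattern length_rep_pattern R_def)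
  moreover have "fvs.subspace (rep_code \<alpha> r n C)"
    unfolding rep_code_def by (rule \<rho>.subspace_image[OF C(2)])
  moreover have "fvs.dim (rep_code \<alpha> r n C) = k"
    unfolding rep_code_def
    using dim_image_eq_if_inj_on[OF rep_vec_linear C(2)]
      inj_on_subset[OF inj_on_rep_vec[OF \<alpha> R[unfolded R_def]] C(1)] C(3) by simp
  moreover have "\<exists>c\<in>rep_code \<alpha> r n C. c i \<noteq> 0" if k: "2 \<le> k" and i: "i < R * n" for i
  proof -
    let ?p = "rep_pattern \<alpha> r n ! i"
    have i: "i < length (rep_pattern \<alpha> r n)" using i by (simp add: length_rep_pattern R_def)
    hence p: "fst ?p \<noteq> 0" "snd ?p < n" using set_rep_pattern[OF \<alpha>] nth_mem by blast+
    then obtain c where "c \<in> C" "c (snd ?p) \<noteq> 0" using nondeg[OF k] by blast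
    moreover have "rep_vec \<alpha> r n c i = fst ?p * c (snd ?p)" using i by (simp add: rep_vec_eq_pattern)
    ultimately show ?thesis using p unfolding rep_code_def by force
  qed
  ultimately show ?thesis by (simp add: is_code_def)
qed

lemma rep_code_is_MWS:
  fixes \<alpha> :: "'a::{finite,field}" and r :: "nat \<Rightarrow> nat"
  defines "R \<equiv> \<Sum>j\<in>{1..<CARD('a)}. r j"
  assumes \<alpha>: "\<alpha> \<noteq> 0" and R: "0 < R" and MWS: "is_MWS n k C"
  shows "is_MWS (R * n) k (rep_code \<alpha> r n C)"
proof -
  interpret \<rho>: module_hom fscale fscale "rep_vec \<alpha> r n" by (rule rep_vec_linear)
  have code: "is_code n k C" using MWS by (simp add: is_MWS_def)
  have C: "C \<subseteq> vecs n" "0 \<in> C" using code fvs.subspace_0 by (auto simp: is_code_def)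
  have "rep_vec \<alpha> r n c = 0 \<longleftrightarrow> c = 0" if "c \<in> C" for c
    using inj_onD[OF inj_on_rep_vec[OF \<alpha> R[unfolded R_def], of n], of c 0] that C
    by (auto simp: \<rho>.zero vecs_def)
  hence "rep_code \<alpha> r n C - {0} = rep_vec \<alpha> r n ` (C - {0})" by (auto simp: rep_code_def)
  hence "hwt (R * n) ` (rep_code \<alpha> r n C - {0}) = (*) R ` hwt n ` (C - {0})"
    using hwt_rep_vec[OF \<alpha>] by (simp add: image_image R_def)
  moreover have "inj ((*) R)" using R by (simp add: inj_def)
  ultimately have "card (hwt (R * n) ` (rep_code \<alpha> r n C - {0})) = card (hwt n ` (C - {0}))"
    by (simp add: card_image inj_on_subset)
  thus ?thesis using MWS rep_code_is_code[OF \<alpha> R[unfolded R_def] code]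
    by (simp add: is_MWS_def R_def)
qed

section \<open>Radix weights\<close>

definition radix_weights :: "nat \<Rightarrow> nat \<Rightarrow> nat" where
  "radix_weights n j = Suc n ^ (j - 1)"

lemma base_digits_unique:
  fixes f g :: "nat \<Rightarrow> nat"
  assumes "\<And>j. j < m \<Longrightarrow> f j < N" and "\<And>j. j < m \<Longrightarrow> g j < N"
    and "(\<Sum>j<m. N ^ j * f j) = (\<Sum>j<m. N ^ j * g j)" and "j < m"
  shows "f j = g j"
  using assms
proof (induction m arbitrary: f g j)
  case (Suc m)
  have split: "(\<Sum>j<Suc m. N ^ j * h j) = h 0 + N * (\<Sum>j<m. N ^ j * h (Suc j))" for h
    by (subst sum.lessThan_Suc_shift) (simp add: sum_distrib_left mult.assoc)
  have eq: "f 0 + N * (\<Sum>j<m. N ^ j * f (Suc j)) = g 0 + N * (\<Sum>j<m. N ^ j * g (Suc j))"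
    using Suc.prems(3) by (simp only: split)
  have lt: "f 0 < N" "g 0 < N" using Suc.prems(1,2) by auto
  have head: "f 0 = g 0" using arg_cong[OF eq, of "\<lambda>x. x mod N"] lt by simp
  hence tail: "(\<Sum>j<m. N ^ j * f (Suc j)) = (\<Sum>j<m. N ^ j * g (Suc j))"
    using eq lt by simp
  show ?case
  proof (cases j)
    case (Suc j')
    thus ?thesis using Suc.IH[of "\<lambda>j. f (Suc j)" "\<lambda>j. g (Suc j)" j'] Suc.prems tail by simp
  qed (use head in simp)
qed simp

lemma cnt_rep_vec_radix_weights:
  fixes \<alpha> :: "'a::{finite,field}" and n :: nat
  defines "R \<equiv> \<Sum>j\<in>{1..<CARD('a)}. radix_weights n j"
  assumes "\<alpha> \<noteq> 0"
  shows "cnt (R * n) (rep_vec \<alpha> (radix_weights n) n c) \<gamma>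
    = (\<Sum>i<CARD('a) - 1. Suc n ^ i * cnt n c (\<gamma> / \<alpha> ^ Suc i))"
proof -
  have "{1..<CARD('a)} = {Suc 0..<Suc (CARD('a) - 1)}"
    using two_le_card_field[where 'a='a] by simp
  hence "(\<Sum>j\<in>{1..<CARD('a)}. g j) = (\<Sum>i<CARD('a) - 1. g (Suc i))" for g :: "nat \<Rightarrow> nat"
    by (simp only: sum.shift_bounds_Suc_ivl atLeast0LessThan)
  thus ?thesis unfolding R_def cnt_rep_vec[OF assms(2)] by (simp add: radix_weights_def)
qed

lemma cnt_eq_if_cnt_rep_vec_radix_weights_eq:
  fixes \<alpha> :: "'a::{finite,field}" and n :: nat
  defines "R \<equiv> \<Sum>j\<in>{1..<CARD('a)}. radix_weights n j"
  assumes \<alpha>: "\<alpha> \<noteq> 0"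
    and eq: "cnt (R * n) (rep_vec \<alpha> (radix_weights n) n c) \<gamma>
      = cnt (R * n) (rep_vec \<alpha> (radix_weights n) n d) \<delta>"
    and i: "i < CARD('a) - 1"
  shows "cnt n c (\<gamma> / \<alpha> ^ Suc i) = cnt n d (\<delta> / \<alpha> ^ Suc i)"
proof (rule base_digits_unique[of "CARD('a) - 1" "\<lambda>i. cnt n c (\<gamma> / \<alpha> ^ Suc i)" "Suc n"
      "\<lambda>i. cnt n d (\<delta> / \<alpha> ^ Suc i)", OF _ _ _ i])
  show "(\<Sum>i<CARD('a) - 1. Suc n ^ i * cnt n c (\<gamma> / \<alpha> ^ Suc i))
      = (\<Sum>i<CARD('a) - 1. Suc n ^ i * cnt n d (\<delta> / \<alpha> ^ Suc i))"
    using eq unfolding R_def cnt_rep_vec_radix_weights[OF \<alpha>] .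
qed (simp_all add: cnt_le le_imp_less_Suc)

lemma rep_code_propB:
  fixes \<alpha> :: "'a::{finite,field}" and n :: nat
  defines "R \<equiv> \<Sum>j\<in>{1..<CARD('a)}. radix_weights n j"
  assumes prim: "primitive \<alpha>" and \<alpha>: "\<alpha> \<noteq> 0" and B: "propB \<alpha> n C"
  shows "propB \<alpha> (R * n) (rep_code \<alpha> (radix_weights n) n C)"
  unfolding propB_def
proof
  fix a assume "a \<in> rep_code \<alpha> (radix_weights n) n C - {0}"
  then obtain c where c: "c \<in> C - {0}" "a = rep_vec \<alpha> (radix_weights n) n c"
    using module_hom.zero[OF rep_vec_linear] by (fastforce simp: rep_code_def)
  have inj: "inj (cnt n c)"
    using B c distinct_Vvec_iff_inj_cnt[OF prim \<alpha>] by (simp add: propB_def)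
  have "inj (cnt (R * n) a)"
  proof (rule injI)
    fix x y assume "cnt (R * n) a x = cnt (R * n) a y"
    moreover have "0 < CARD('a) - 1" using two_le_card_field[where 'a='a] by simp
    ultimately have "cnt n c (x / \<alpha> ^ Suc 0) = cnt n c (y / \<alpha> ^ Suc 0)"
      using cnt_eq_if_cnt_rep_vec_radix_weights_eq[OF \<alpha>] c unfolding R_def by blast
    hence "x / \<alpha> = y / \<alpha>" using inj by (simp add: inj_eq)
    thus "x = y" using \<alpha> by simp
  qed
  thus "distinct (Vvec \<alpha> (R * n) a)" using distinct_Vvec_iff_inj_cnt[OF prim \<alpha>] by simp
qed

lemma rep_code_propA:
  fixes \<alpha> :: "'a::{finite,field}" and n :: nat
  defines "R \<equiv> \<Sum>j\<in>{1..<CARD('a)}. radix_weights n j"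
  assumes prim: "primitive \<alpha>" and \<alpha>: "\<alpha> \<noteq> 0" and MWS: "is_MWS n k C" and B: "propB \<alpha> n C"
  shows "propA (R * n) (rep_code \<alpha> (radix_weights n) n C)"
  unfolding propA_def
proof (intro exI[of _ 1] conjI ballI impI)
  fix a b assume "a \<in> rep_code \<alpha> (radix_weights n) n C" "b \<in> rep_code \<alpha> (radix_weights n) n C"
  then obtain c d where cd: "c \<in> C" "d \<in> C"
    and ab: "a = rep_vec \<alpha> (radix_weights n) n c" "b = rep_vec \<alpha> (radix_weights n) n d"
    by (auto simp: rep_code_def)
  assume eq: "cnt (R * n) a 1 = cnt (R * n) b 1"
  have digits: "cnt n c (1 / \<alpha> ^ Suc i) = cnt n d (1 / \<alpha> ^ Suc i)" if "i < CARD('a) - 1" for i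
    by (rule cnt_eq_if_cnt_rep_vec_radix_weights_eq[OF \<alpha> eq[unfolded ab R_def] that])
  have "cnt n c x = cnt n d x" if x: "x \<noteq> 0" for x
  proof -
    obtain i where "i < CARD('a) - 1" "x = 1 / \<alpha> ^ Suc i"
      using primitive_nonzero_eq_inverse_power[OF prim \<alpha> x] by blast
    thus ?thesis using digits by simp
  qed
  hence "c = d" using MWS_eq_if_nonzero_counts_eq[OF MWS B prim \<alpha> cd] by blast
  thus "a = b" using ab by simp
qed simp

lemma rep_code_radix_weights:
  fixes \<alpha> :: "'a::{finite,field}" and n :: nat
  defines "R \<equiv> \<Sum>j\<in>{1..<CARD('a)}. radix_weights n j"
  assumes prim: "primitive \<alpha>" and MWS: "is_MWS n k C" and B: "propB \<alpha> n C"
  shows "is_MWS (R * n) k (rep_code \<alpha> (radix_weights n) n C) \<and>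
    propA (R * n) (rep_code \<alpha> (radix_weights n) n C) \<and>
    propB \<alpha> (R * n) (rep_code \<alpha> (radix_weights n) n C)"
proof (cases "C = {0}")
  case True
  hence "rep_code \<alpha> (radix_weights n) n C = {0}"
    using module_hom.zero[OF rep_vec_linear] by (simp add: rep_code_def)
  thus ?thesis using MWS True
    by (auto simp: is_MWS_zero_code_iff propA_def propB_def intro: exI[of _ 1])
next
  case False
  moreover have "0 \<in> C" using MWS fvs.subspace_0 unfolding is_MWS_def is_code_def by blast
  ultimately obtain c where "c \<in> C - {0}" by blast
  hence \<alpha>: "\<alpha> \<noteq> 0" using B nonzero_if_distinct_Vvec by (auto simp: propB_def)
  have "radix_weights n 1 \<le> R"
    unfolding R_def using two_le_card_field[where 'a='a] by (intro member_le_sum) auto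
  hence "0 < R" by (simp add: radix_weights_def)
  thus ?thesis
    using rep_code_is_MWS[OF \<alpha> _ MWS] rep_code_propA[OF prim \<alpha> MWS B] rep_code_propB[OF prim \<alpha> B]
    unfolding R_def by blast
qed

theorem mainTheorem9:
  fixes \<alpha> :: "'a::{finite,field}" and C :: "(nat \<Rightarrow> 'a) set" and n k :: nat
  assumes "primitive \<alpha>"
    and "is_MWS n k C"
    and "propB \<alpha> n C"
  shows "\<exists>r :: nat \<Rightarrow> nat. (\<exists>j\<in>{1..card (UNIV :: 'a set) - 1}. r j \<noteq> 0) \<and>
           (let R = (\<Sum>j = 1..card (UNIV :: 'a set) - 1. r j) in
              is_MWS (R * n) k (rep_code \<alpha> r n C) \<and>
              propA (R * n) (rep_code \<alpha> r n C) \<and>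
              propB \<alpha> (R * n) (rep_code \<alpha> r n C))"
proof -
  let ?r = "radix_weights n"
  have card: "2 \<le> CARD('a)" by (rule two_le_card_field)
  hence "(\<Sum>j = 1..CARD('a) - 1. ?r j) = (\<Sum>j\<in>{1..<CARD('a)}. ?r j)" by (intro sum.cong) auto
  moreover have "1 \<in> {1..CARD('a) - 1}" "?r 1 \<noteq> 0" using card by (auto simp: radix_weights_def)
  ultimately show ?thesis
    using rep_code_radix_weights[OF assms] unfolding Let_def by (intro exI[of _ ?r]) auto
qed

end
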